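(* (i) For $0\le\alpha<1$, the $\mathcal{S}^*_{car}$-radius of $\mathcal{S}^*(\alpha)$ is $1/(3-4\alpha)$ if $0\le\alpha\le1/4$ and $3/(7-4\alpha)$ if $1/4<\alpha<1$. (ii) For $0\le\alpha<1$, the $\mathcal{S}^*_{car}$-radius of $\mathcal{S}^*[1-\alpha,0]$ is $1/(2(1-\alpha))$ if $0<\alpha<1/2$ and $1$ if $1/2\le\alpha<1$. (iii) For $0<\alpha\le1$, the $\mathcal{S}^*_{car}$-radius of $\mathcal{S}^*[\alpha,-\alpha]$ is $1$ if $0<\alpha\le1/3$ and $1/(3\alpha)$ if $1/3<\alpha\le1$. (iv) For $M>1/2$, the $\mathcal{S}^*_{car}$-radius of $\mathcal{S}^*[1,-(M-1)/M]$ is $M/(3M-1)$.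
   Context: $\mathbb{D}=\{z:|z|<1\}$; $\mathcal{A}$ is the class of analytic $f$ on $\mathbb{D}$ with $f(0)=0$, $f'(0)=1$. $F\prec G$ means $F=G\circ w$ for an analytic $w:\mathbb{D}\to\mathbb{D}$ with $w(0)=0$. $\mathcal{S}^*_{car}$ is the class of $f\in\mathcal{A}$ with $zf'(z)/f(z)\prec 1+z+z^2/2$; $\mathcal{S}^*(\alpha)$ is the class of $f\in\mathcal{A}$ with $\operatorname{Re}(zf'(z)/f(z))>\alpha$ on $\mathbb{D}$; for $-1\le B<A\le1$, $\mathcal{S}^*[A,B]$ is the class of $f\in\mathcal{A}$ with $zf'(z)/f(z)\prec(1+Az)/(1+Bz)$. For a class $\mathcal{F}\subseteq\mathcal{A}$, the $\mathcal{S}^*_{car}$-radius of $\mathcal{F}$ is the supremum of all $r\in(0,1]$ such that $f(rz)/r\in\mathcal{S}^*_{car}$ for every $f\in\mathcal{F}$. *)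

theory Defs
  imports "HOL-Analysis.Analysis"
begin

definition unit_disk :: "complex set" where
  "unit_disk = ball 0 1"

definition class_A :: "(complex \<Rightarrow> complex) set" where
  "class_A = {f. f holomorphic_on unit_disk \<and> f 0 = 0 \<and> deriv f 0 = 1}"

definition subordinate :: "(complex \<Rightarrow> complex) \<Rightarrow> (complex \<Rightarrow> complex) \<Rightarrow> bool" where
  "subordinate F G \<longleftrightarrow> (\<exists>w. w holomorphic_on unit_disk \<and> w ` unit_disk \<subseteq> unit_disk
      \<and> w 0 = 0 \<and> (\<forall>z\<in>unit_disk. F z = G (w z)))"

definition starq :: "(complex \<Rightarrow> complex) \<Rightarrow> complex \<Rightarrow> complex" where
  "starq f z = (if z = 0 then 1 else z * deriv f z / f z)"

definition S_car :: "(complex \<Rightarrow> complex) set" where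
  "S_car = {f \<in> class_A. subordinate (starq f) (\<lambda>z. 1 + z + z\<^sup>2 / 2)}"

definition S_star_order :: "real \<Rightarrow> (complex \<Rightarrow> complex) set" where
  "S_star_order \<alpha> = {f \<in> class_A. \<forall>z\<in>unit_disk. Re (starq f z) > \<alpha>}"

definition S_janowski :: "real \<Rightarrow> real \<Rightarrow> (complex \<Rightarrow> complex) set" where
  "S_janowski A B = {f \<in> class_A.
      subordinate (starq f) (\<lambda>z. (1 + of_real A * z) / (1 + of_real B * z))}"

definition car_radius :: "(complex \<Rightarrow> complex) set \<Rightarrow> real" where
  "car_radius F = Sup {r. 0 < r \<and> r \<le> 1 \<and>
      (\<forall>f\<in>F. (\<lambda>z. f (of_real r * z) / of_real r) \<in> S_car)}"

end

theory Submission
  imports Defs "HOL-Complex_Analysis.Complex_Analysis"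
begin

text \<open>
  Write \<open>\<phi>(w) = 1 + w + w\<^sup>2/2\<close>. As \<open>2 \<phi>(w) - 1 = (1 + w)\<^sup>2\<close>, a function of \<open>\<A>\<close> lies in
  \<open>S\<^sup>*\<^sub>c\<^sub>a\<^sub>r\<close> as soon as \<open>zf'/f\<close> takes values in \<open>\<phi>(\<bbbD>)\<close>, with Schwarz function
  \<open>w = \<surd>(2 zf'/f - 1) - 1\<close>. The domain \<open>\<phi>(\<bbbD>)\<close> meets the real axis in \<open>(1/2, 5/2)\<close> and
  contains every disc centred at a real \<open>c\<close> of radius \<open>min (c - 1/2) (5/2 - c)\<close>.

  For \<open>f \<in> S\<^sup>*[A,B]\<close> and \<open>|z| < r\<close>, the Schwarz lemma places \<open>zf'/f\<close> in the image of
  \<open>|w| < r\<close> under \<open>(1 + Aw)/(1 + Bw)\<close>, a union of discs centred on the real axis; these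
  fit into \<open>\<phi>(\<bbbD>)\<close> precisely when \<open>(2A - B) r \<le> 1\<close> and \<open>(2A - 5B) r \<le> 3\<close>.
  Sharpness comes from the function with \<open>zf'/f = (1 + Az)/(1 + Bz)\<close>, whose values at
  real points \<open>\<plusminus>s\<close> leave \<open>(1/2, 5/2)\<close> once \<open>s\<close> exceeds that bound. Finally
  \<open>S\<^sup>*(\<alpha>) \<subseteq> S\<^sup>*[1 - 2\<alpha>, -1]\<close> contains this extremal function, so both classes have the
  same radius.
\<close>

lemma open_unit_disk: "open unit_disk"
  by (simp add: unit_disk_def)

lemma mem_unit_disk: "z \<in> unit_disk \<longleftrightarrow> cmod z < 1"
  by (simp add: unit_disk_def)

lemma abs_mult_less_1:
  fixes B s :: real
  assumes "\<bar>B\<bar> \<le> 1" "\<bar>s\<bar> < 1"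
  shows "\<bar>B * s\<bar> < 1"
  using mult_left_le_one_le[of "\<bar>s\<bar>" "\<bar>B\<bar>"] assms by (simp add: abs_mult)

lemma norm_of_real_mult_less_1:
  assumes "\<bar>B\<bar> \<le> 1" "cmod z < 1"
  shows "cmod (of_real B * z) < 1"
  using abs_mult_less_1[of B "cmod z"] assms by (simp add: norm_mult)

definition phi_car :: "complex \<Rightarrow> complex" where
  "phi_car w = 1 + w + w^2/2"

lemma S_car_altdef: "S_car = {f \<in> class_A. subordinate (starq f) phi_car}"
  by (simp add: S_car_def phi_car_def[abs_def])

text \<open>
  This is \<open>phi_car ` unit_disk\<close> written in \<open>q = 2p - 1\<close>: the condition
  \<open>Re (csqrt q) > |q|/2\<close>, squared, or in polar form the cardioid \<open>|q| < 2 (1 + cos (arg q))\<close>.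
\<close>
definition car_region :: "complex set" where
  "car_region = {p. cmod (2*p - 1)^2 - 2 * Re (2*p - 1) < 2 * cmod (2*p - 1)}"

lemma csqrt_in_ball_if_car_region:
  assumes "p \<in> car_region"
  shows "csqrt (2*p - 1) \<in> ball 1 1" and "2*p - 1 \<notin> \<real>\<^sub>\<le>\<^sub>0"
proof -
  define q where "q = 2*p - 1"
  define u where "u = csqrt q"
  have q: "cmod q ^ 2 - 2 * Re q < 2 * cmod q"
    using assms by (simp add: car_region_def q_def)
  have "sqrt ((cmod q / 2)^2) < sqrt ((cmod q + Re q) / 2)"
    using q by (simp add: power2_eq_square field_simps)
  then have Re_u: "cmod q / 2 < Re u"
    by (simp add: u_def)
  have "cmod (1 - u) ^ 2 = cmod u ^ 2 - 2 * Re u + 1"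
    unfolding cmod_power2 by (simp add: power2_eq_square algebra_simps)
  also have "\<dots> < 1"
    using Re_u by (simp add: u_def norm_power[symmetric])
  finally show "csqrt (2*p - 1) \<in> ball 1 1"
    by (simp add: u_def q_def dist_norm power_less_one_iff)
  show "2*p - 1 \<notin> \<real>\<^sub>\<le>\<^sub>0"
  proof
    assume "2*p - 1 \<in> \<real>\<^sub>\<le>\<^sub>0"
    then have "cmod q = - Re q"
      by (auto simp: complex_nonpos_Reals_iff q_def cmod_def)
    with q show False
      by (simp add: power2_eq_square)
  qed
qed

lemma phi_car_in_car_region:
  assumes "cmod w < 1"
  shows "phi_car w \<in> car_region"
proof -
  define x where "x = Re (1 + w)"
  define y where "y = Im (1 + w)"
  have q: "2 * phi_car w - 1 = (1 + w)^2"
    by (simp add: phi_car_def power2_eq_square algebra_simps)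
  have norm_q: "cmod ((1 + w)^2) = x^2 + y^2"
    unfolding norm_power cmod_power2 x_def y_def ..
  have Re_q: "Re ((1 + w)^2) = x^2 - y^2"
    by (simp add: x_def y_def power2_eq_square)
  have "x^2 + y^2 < 2*x"
    using assms by (simp add: x_def y_def cmod_def power2_eq_square algebra_simps)
  then have "(x^2 + y^2)^2 < (2*x)^2"
    by (intro power_strict_mono) auto
  then have "(x^2 + y^2)^2 - 2 * (x^2 - y^2) < 2 * (x^2 + y^2)"
    by (simp add: power2_eq_square algebra_simps)
  then show ?thesis
    unfolding car_region_def mem_Collect_eq q norm_q Re_q .
qed

lemma of_real_notin_car_region:
  assumes "x \<le> 1/2 \<or> 5/2 \<le> x"
  shows "complex_of_real x \<notin> car_region"
proof -
  define q where "q = 2*x - 1"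
  have q: "2 * complex_of_real x - 1 = of_real q"
    by (simp add: q_def)
  have "2 * \<bar>q\<bar> \<le> \<bar>q\<bar>^2 - 2*q"
  proof (cases "q \<le> 0")
    case True
    then show ?thesis by simp
  next
    case False
    then have "4 \<le> q" using assms by (auto simp: q_def)
    moreover from this have "4 * q \<le> q * q" by (intro mult_right_mono) auto
    ultimately show ?thesis by (simp add: power2_eq_square)
  qed
  then show ?thesis
    unfolding car_region_def mem_Collect_eq q norm_of_real Re_complex_of_real by simp
qed

lemma subordinate_phi_carI:
  assumes holP: "P holomorphic_on unit_disk" and P0: "P 0 = 1"
    and P_car: "P ` unit_disk \<subseteq> car_region" and F: "\<And>z. z \<in> unit_disk \<Longrightarrow> F z = P z"
  shows "subordinate F phi_car"
  unfolding subordinate_def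
proof (intro exI conjI ballI)
  define w where "w = (\<lambda>z. csqrt (2 * P z - 1) - 1)"
  have car: "P z \<in> car_region" if "z \<in> unit_disk" for z
    using P_car that by blast
  show "w holomorphic_on unit_disk"
    unfolding w_def by (intro holomorphic_intros holP) (use csqrt_in_ball_if_car_region(2)[OF car] in auto)
  show "w ` unit_disk \<subseteq> unit_disk"
    using csqrt_in_ball_if_car_region(1)[OF car]
    by (auto simp: w_def unit_disk_def dist_norm norm_minus_commute)
  show "w 0 = 0"
    by (simp add: w_def P0)
  fix z assume "z \<in> unit_disk"
  have "phi_car (w z) = (1 + (csqrt (2 * P z - 1))^2) / 2"
    by (simp add: phi_car_def w_def power2_eq_square field_simps)
  also have "\<dots> = P z"
    by simp
  finally show "F z = phi_car (w z)"
    using F[OF \<open>z \<in> unit_disk\<close>] by simp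
qed

text \<open>
  Here \<open>R = |q|\<close>, \<open>x = Re q\<close> and \<open>d = |q - a|\<close>. Multiplied by \<open>a\<close>, the claim becomes a
  quadratic in \<open>R\<close> that is negative at \<open>R = 0\<close> and at \<open>R = a + d\<close>; it is convex when
  \<open>a \<ge> 1\<close>, and for \<open>a < 1\<close> none of its terms is positive.
\<close>
lemma cardioid_ineq:
  fixes a d R x :: real
  assumes R: "0 \<le> R" "R \<le> a + d" and d: "0 \<le> d" "d < a" "a + d < 4"
    and eq: "R^2 - 2*a*x + a^2 = d^2"
  shows "R^2 - 2*x < 2*R"
proof -
  have a: "0 < a" using d by linarith
  have "a * (R^2 - 2*x - 2*R) < 0"
  proof (cases "a < 1")
    case True
    have "(a - 1) * R^2 \<le> 0" using True by (simp add: mult_nonpos_nonneg)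
    moreover have "0 \<le> a * R" using a R by simp
    moreover have "(d - a) * (d + a) < 0" using d by (intro mult_neg_pos) auto
    moreover have "a * (R^2 - 2*x - 2*R) = (a - 1) * R^2 - 2*a*R + (d - a) * (d + a)"
      using eq by (simp add: power2_eq_square algebra_simps)
    ultimately show ?thesis by linarith
  next
    case False
    have "(a - 1) * R * (R - (a + d)) \<le> 0"
      using False R by (simp add: mult_nonneg_nonpos)
    moreover have "a * R * (a + d - 4) + (a + d - R) * (d - a) < 0"
    proof (cases "R = 0")
      case True
      then show ?thesis using d by (simp add: mult_pos_neg)
    next
      case False
      have "a * R * (a + d - 4) < 0" using a R d False by (simp add: mult_pos_neg)
      moreover have "(a + d - R) * (d - a) \<le> 0" using R d by (simp add: mult_nonneg_nonpos)
      ultimately show ?thesis by linarith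
    qed
    moreover have "a * (R^2 - 2*x - 2*R)
        = (a - 1) * R * (R - (a + d)) + a * R * (a + d - 4) + (a + d - R) * (d - a)"
      using eq by (simp add: power2_eq_square algebra_simps)
    ultimately show ?thesis by linarith
  qed
  then show ?thesis using a by (simp add: mult_less_0_iff)
qed

lemma ball_subset_car_region:
  "ball (complex_of_real c) (min (c - 1/2) (5/2 - c)) \<subseteq> car_region"
proof
  fix p assume "p \<in> ball (complex_of_real c) (min (c - 1/2) (5/2 - c))"
  then have p: "cmod (p - of_real c) < c - 1/2" "cmod (p - of_real c) < 5/2 - c"
    by (auto simp: dist_norm norm_minus_commute)
  define q where "q = 2*p - 1"
  define a where "a = 2*c - 1"
  have "q - of_real a = 2 * (p - of_real c)"
    by (simp add: q_def a_def algebra_simps)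
  then have d: "cmod (q - of_real a) = 2 * cmod (p - of_real c)"
    by (simp only: norm_mult) simp
  have a: "0 < a"
    using p(1) norm_ge_zero[of "p - of_real c"] unfolding a_def by linarith
  have "cmod q \<le> cmod (complex_of_real a) + cmod (q - of_real a)"
    by (rule norm_triangle_sub)
  with a have "cmod q \<le> a + cmod (q - of_real a)"
    by simp
  moreover have "cmod q ^ 2 - 2*a * Re q + a^2 = cmod (q - of_real a) ^ 2"
    unfolding cmod_power2 by (simp add: power2_eq_square algebra_simps)
  moreover have "cmod (q - of_real a) < a" "a + cmod (q - of_real a) < 4"
    using p d by (simp_all add: a_def)
  ultimately have "cmod q ^ 2 - 2 * Re q < 2 * cmod q"
    by (intro cardioid_ineq[where a = a and d = "cmod (q - of_real a)"]) auto
  then show "p \<in> car_region"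
    by (simp add: car_region_def q_def)
qed

definition janowski :: "real \<Rightarrow> real \<Rightarrow> complex \<Rightarrow> complex" where
  "janowski A B z = (1 + of_real A * z) / (1 + of_real B * z)"

lemma S_janowski_altdef: "S_janowski A B = {f \<in> class_A. subordinate (starq f) (janowski A B)}"
  by (simp add: S_janowski_def janowski_def[abs_def])

lemma janowski_0 [simp]: "janowski A B 0 = 1"
  by (simp add: janowski_def)

lemma janowski_denom_nonzero:
  assumes "\<bar>B\<bar> \<le> 1" "cmod z < 1"
  shows "1 + of_real B * z \<noteq> 0"
proof
  assume "1 + of_real B * z = 0"
  then have "cmod (of_real B * z) = 1"
    by (simp add: add_eq_0_iff)
  with norm_of_real_mult_less_1[OF assms] show False
    by simp
qed

lemma holomorphic_janowski:
  assumes "\<bar>B\<bar> \<le> 1"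
  shows "janowski A B holomorphic_on unit_disk"
  unfolding janowski_def[abs_def]
  by (intro holomorphic_intros) (use janowski_denom_nonzero[OF assms] in \<open>auto simp: mem_unit_disk\<close>)

lemma janowski_of_real:
  assumes "1 + B*x \<noteq> 0"
  shows "janowski A B (of_real x) = of_real ((1 + A*x) / (1 + B*x))"
  using assms by (simp add: janowski_def field_simps)

lemma norm_janowski_minus_center:
  assumes B: "\<bar>B\<bar> \<le> 1" and w: "cmod w < 1"
  defines "s \<equiv> cmod w"
  shows "cmod (janowski A B w - of_real ((1 - A*B * s^2) / (1 - B^2 * s^2)))
           = \<bar>A - B\<bar> * s / (1 - B^2 * s^2)"
proof -
  have den: "1 + of_real B * w \<noteq> 0"
    using janowski_denom_nonzero[OF B w] .
  have "\<bar>B * s\<bar> < 1"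
    using abs_mult_less_1[OF B] w by (simp add: s_def)
  then have D: "0 < 1 - B^2 * s^2"
    by (simp flip: abs_square_less_1 power_mult_distrib)
  define S where "S = complex_of_real (s^2)"
  have D_complex: "of_real (1 - B^2 * s^2) = 1 - of_real B ^ 2 * S"
    by (simp add: S_def)
  have D_nonzero: "1 - of_real B ^ 2 * S \<noteq> 0"
    using D unfolding D_complex[symmetric] of_real_eq_0_iff by simp
  have "janowski A B w - of_real ((1 - A*B * s^2) / (1 - B^2 * s^2))
      = (1 + of_real A * w) / (1 + of_real B * w) - (1 - of_real A * of_real B * S) / (1 - of_real B ^ 2 * S)"
    by (simp add: janowski_def S_def)
  also have "\<dots> = of_real (A - B) * (w + of_real B * S) / ((1 + of_real B * w) * of_real (1 - B^2 * s^2))"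
    using den D_nonzero unfolding D_complex by (simp add: field_simps) (simp add: algebra_simps power2_eq_square)
  finally have eq: "janowski A B w - of_real ((1 - A*B * s^2) / (1 - B^2 * s^2))
      = of_real (A - B) * (w + of_real B * S) / ((1 + of_real B * w) * of_real (1 - B^2 * s^2))" .
  have "S = w * cnj w"
    unfolding S_def s_def by (rule complex_norm_square)
  then have "w + of_real B * S = w * cnj (1 + of_real B * w)"
    by (simp add: algebra_simps)
  then have num: "cmod (w + of_real B * S) = s * cmod (1 + of_real B * w)"
    by (simp only: norm_mult complex_mod_cnj s_def)
  show ?thesis
    unfolding eq norm_divide norm_mult norm_of_real num using den D by simp
qed

lemma janowski_image_ball_subset_car_region:
  assumes B: "\<bar>B\<bar> \<le> 1" "B \<le> A" and r: "r \<le> 1" "(2*A - B) * r \<le> 1" "(2*A - 5*B) * r \<le> 3"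
  shows "janowski A B ` ball 0 r \<subseteq> car_region"
proof
  fix p assume "p \<in> janowski A B ` ball 0 r"
  then obtain v where v: "cmod v < r" and p: "p = janowski A B v"
    by auto
  define s where "s = cmod v"
  have s: "0 \<le> s" "s < r" "s < 1"
    using v r by (auto simp: s_def)
  have below: "k * s < c" if "k * r \<le> c" "0 < c" for k c :: real
  proof (cases "k \<le> 0")
    case True
    then have "k * s \<le> 0"
      using s(1) by (rule mult_nonpos_nonneg)
    with that show ?thesis by linarith
  next
    case False
    then have "k * s < k * r"
      using s(2) by simp
    with that show ?thesis by linarith
  qed
  have "\<bar>B * s\<bar> < 1"
    using abs_mult_less_1[OF B(1)] s by simp
  then have pos: "0 < 1 + B * s" "0 < 1 - B * s"
    by (auto simp: abs_less_iff)
  define D where "D = 1 - B^2 * s^2"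
  define c where "c = (1 - A*B * s^2) / D"
  define \<rho> where "\<rho> = (A - B) * s / D"
  have D: "0 < D"
    using mult_pos_pos[OF pos] by (simp add: D_def power2_eq_square algebra_simps)
  have "c - 1/2 - \<rho> = (1 + B * s) * (1 - (2*A - B) * s) / (2 * D)"
    using D by (simp add: c_def \<rho>_def field_simps) (simp add: D_def power2_eq_square algebra_simps)
  moreover have "5/2 - c - \<rho> = (1 - B * s) * (3 - (2*A - 5*B) * s) / (2 * D)"
    using D by (simp add: c_def \<rho>_def field_simps) (simp add: D_def power2_eq_square algebra_simps)
  moreover have "0 < (1 + B * s) * (1 - (2*A - B) * s) / (2 * D)"
    using pos below[OF r(2)] D by simp
  moreover have "0 < (1 - B * s) * (3 - (2*A - 5*B) * s) / (2 * D)"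
    using pos below[OF r(3)] D by simp
  moreover have "cmod (p - of_real c) = \<rho>"
    using norm_janowski_minus_center[OF B(1), of v A] v r B(2)
    by (simp add: p c_def \<rho>_def D_def s_def)
  ultimately have "p \<in> ball (of_real c) (min (c - 1/2) (5/2 - c))"
    by (simp add: dist_norm norm_minus_commute)
  then show "p \<in> car_region"
    using ball_subset_car_region by blast
qed

lemma janowski_of_real_notin_car_region:
  assumes B: "\<bar>B\<bar> \<le> 1" and s: "0 \<le> s" "s < 1"
    and big: "1 \<le> (2*A - B) * s \<or> 3 \<le> (2*A - 5*B) * s"
  obtains x where "\<bar>x\<bar> = s" "janowski A B (of_real x) \<notin> car_region"
proof -
  have "\<bar>B * s\<bar> < 1"
    using abs_mult_less_1[OF B] s by simp
  then have pos: "0 < 1 - B * s" "0 < 1 + B * s"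
    by (auto simp: abs_less_iff)
  show ?thesis
    using big
  proof
    assume "1 \<le> (2*A - B) * s"
    then have "(1 - A * s) / (1 - B * s) \<le> 1/2"
      using pos by (simp add: field_simps)
    moreover have "janowski A B (of_real (- s)) = of_real ((1 - A * s) / (1 - B * s))"
      using janowski_of_real[of B "- s" A] pos by simp
    ultimately have "janowski A B (of_real (- s)) \<notin> car_region"
      using of_real_notin_car_region by metis
    then show ?thesis
      using that[of "- s"] s by simp
  next
    assume "3 \<le> (2*A - 5*B) * s"
    then have "5/2 \<le> (1 + A * s) / (1 + B * s)"
      using pos by (simp add: field_simps)
    moreover have "janowski A B (of_real s) = of_real ((1 + A * s) / (1 + B * s))"
      using janowski_of_real[of B s A] pos by simp
    ultimately have "janowski A B (of_real s) \<notin> car_region"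
      using of_real_notin_car_region by metis
    then show ?thesis
      using that[of s] s by simp
  qed
qed

definition rescale :: "real \<Rightarrow> (complex \<Rightarrow> complex) \<Rightarrow> complex \<Rightarrow> complex" where
  "rescale r f = (\<lambda>z. f (of_real r * z) / of_real r)"

lemma has_field_derivative_rescale:
  assumes f: "f holomorphic_on unit_disk" and r: "0 < r" "r \<le> 1" and z: "z \<in> unit_disk"
  shows "(rescale r f has_field_derivative deriv f (of_real r * z)) (at z)"
proof -
  have "of_real r * z \<in> unit_disk"
    using norm_of_real_mult_less_1[of r z] r z by (simp add: mem_unit_disk)
  then have "(f has_field_derivative deriv f (of_real r * z)) (at (of_real r * z))"
    using f holomorphic_derivI open_unit_disk by blast
  then have "((\<lambda>z. f (of_real r * z) / of_real r) has_field_derivative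
      deriv f (of_real r * z) * of_real r / of_real r) (at z)"
    by (auto intro!: derivative_eq_intros DERIV_chain2[where f = f])
  then show ?thesis
    using r by (simp add: rescale_def)
qed

lemma rescale_class_A:
  assumes f: "f \<in> class_A" and r: "0 < r" "r \<le> 1"
  shows "rescale r f \<in> class_A"
proof -
  have f: "f holomorphic_on unit_disk" "f 0 = 0" "deriv f 0 = 1"
    using f by (auto simp: class_A_def)
  have "rescale r f holomorphic_on unit_disk"
    using has_field_derivative_rescale[OF f(1) r]
    by (auto simp: holomorphic_on_open[OF open_unit_disk])
  moreover have "deriv (rescale r f) 0 = 1"
    using DERIV_imp_deriv[OF has_field_derivative_rescale[OF f(1) r, of 0]] f(3)
    by (simp add: mem_unit_disk)
  ultimately show ?thesis
    using f(2) by (simp add: class_A_def rescale_def)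
qed

lemma starq_rescale:
  assumes f: "f \<in> class_A" and r: "0 < r" "r \<le> 1" and z: "z \<in> unit_disk"
  shows "starq (rescale r f) z = starq f (of_real r * z)"
proof -
  have "deriv (rescale r f) z = deriv f (of_real r * z)"
    using f r z by (intro DERIV_imp_deriv has_field_derivative_rescale) (auto simp: class_A_def)
  then show ?thesis
    using r by (simp add: starq_def rescale_def field_simps)
qed

lemma holomorphic_starq:
  assumes f: "f \<in> class_A" and nz: "\<And>z. z \<in> unit_disk \<Longrightarrow> z \<noteq> 0 \<Longrightarrow> f z \<noteq> 0"
  shows "starq f holomorphic_on unit_disk"
proof -
  have f: "f holomorphic_on unit_disk" "f 0 = 0" "deriv f 0 = 1"
    using f by (auto simp: class_A_def)
  define h where "h = (\<lambda>z. if z = 0 then deriv f 0 else (f z - f 0) / (z - 0))"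
  have h: "h holomorphic_on unit_disk"
    unfolding h_def by (rule pole_lemma_open[OF f(1) open_unit_disk])
  have f_eq: "f z = z * h z" for z
    by (simp add: h_def f(2))
  have h_nz: "h z \<noteq> 0" if "z \<in> unit_disk" for z
    using nz[OF that] f by (auto simp: h_def)
  have "starq f z = 1 + z * deriv h z / h z" if z: "z \<in> unit_disk" for z
  proof -
    have "((\<lambda>z. z * h z) has_field_derivative h z + z * deriv h z) (at z)"
      using holomorphic_derivI[OF h open_unit_disk z] by (auto intro!: derivative_eq_intros)
    then have "deriv f z = h z + z * deriv h z"
      unfolding f_eq[abs_def] by (rule DERIV_imp_deriv)
    then show ?thesis
      using h_nz[OF z] by (simp add: starq_def f_eq field_simps)
  qed
  moreover have "(\<lambda>z. 1 + z * deriv h z / h z) holomorphic_on unit_disk"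
    by (intro holomorphic_intros h open_unit_disk) (use h_nz in auto)
  ultimately show ?thesis
    by (simp add: holomorphic_transform)
qed

lemma exists_class_A_starq_eq:
  assumes G: "G holomorphic_on unit_disk" and G0: "G 0 = 1"
  obtains f where "f \<in> class_A" "\<And>z. z \<in> unit_disk \<Longrightarrow> starq f z = G z"
proof -
  define k where "k = (\<lambda>z. if z = 0 then deriv G 0 else (G z - G 0) / (z - 0))"
  have "k holomorphic_on unit_disk"
    unfolding k_def by (rule pole_lemma_open[OF G open_unit_disk])
  then obtain g0 where g0: "\<And>z. z \<in> unit_disk \<Longrightarrow> (g0 has_field_derivative k z) (at z within unit_disk)"
    using holomorphic_convex_primitive'[OF _ open_unit_disk] by (auto simp: unit_disk_def)
  define g where "g = (\<lambda>z. g0 z - g0 0)"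
  have g: "(g has_field_derivative k z) (at z)" if "z \<in> unit_disk" for z
    using g0[OF that] at_within_open[OF that open_unit_disk] unfolding g_def
    by (auto intro!: derivative_eq_intros)
  define f where "f = (\<lambda>z. z * exp (g z))"
  have f': "(f has_field_derivative exp (g z) + z * (exp (g z) * k z)) (at z)"
    if "z \<in> unit_disk" for z
    unfolding f_def using g[OF that] by (auto intro!: derivative_eq_intros)
  have "f holomorphic_on unit_disk"
    using f' by (auto simp: holomorphic_on_open[OF open_unit_disk])
  moreover have "deriv f 0 = 1"
    using DERIV_imp_deriv[OF f'[of 0]] by (simp add: mem_unit_disk g_def)
  ultimately have "f \<in> class_A"
    by (simp add: class_A_def f_def)
  moreover have "starq f z = G z" if z: "z \<in> unit_disk" for z
  proof (cases "z = 0")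
    case True
    then show ?thesis by (simp add: starq_def G0)
  next
    case False
    then have "z * k z = G z - 1"
      by (simp add: k_def G0)
    moreover have "starq f z = 1 + z * k z"
      using False DERIV_imp_deriv[OF f'[OF z]] by (simp add: starq_def f_def field_simps)
    ultimately show ?thesis
      by simp
  qed
  ultimately show ?thesis
    using that by blast
qed

lemma car_radius_eqI:
  assumes R: "0 < R" "R \<le> 1"
    and inner: "\<And>r f. 0 < r \<Longrightarrow> r \<le> R \<Longrightarrow> f \<in> F \<Longrightarrow> rescale r f \<in> S_car"
    and outer: "\<And>r. R < r \<Longrightarrow> r \<le> 1 \<Longrightarrow> \<exists>f\<in>F. rescale r f \<notin> S_car"
  shows "car_radius F = R"
proof -
  have "r \<le> R" if "r \<le> 1" "\<forall>f\<in>F. rescale r f \<in> S_car" for r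
    using outer[of r] that by (meson not_le)
  then have "{r. 0 < r \<and> r \<le> 1 \<and> (\<forall>f\<in>F. rescale r f \<in> S_car)} = {0<..R}"
    using R inner by auto
  then show ?thesis
    using R by (simp add: car_radius_def rescale_def)
qed

lemma rescale_in_S_car_if_subordinate:
  assumes f: "f \<in> class_A" and sub: "subordinate (starq f) G"
    and G: "G holomorphic_on unit_disk" "G 0 = 1" "G ` ball 0 r \<subseteq> car_region"
    and r: "0 < r" "r \<le> 1"
  shows "rescale r f \<in> S_car"
proof -
  obtain w where w: "w holomorphic_on unit_disk" "w ` unit_disk \<subseteq> unit_disk" "w 0 = 0"
    and starq_f: "\<And>z. z \<in> unit_disk \<Longrightarrow> starq f z = G (w z)"
    using sub unfolding subordinate_def by blast
  have rz: "of_real r * z \<in> unit_disk" if "z \<in> unit_disk" for z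
    using norm_of_real_mult_less_1[of r z] r that by (simp add: mem_unit_disk)
  define P where "P = (\<lambda>z. G (w (of_real r * z)))"
  have "P holomorphic_on unit_disk"
    unfolding P_def using w(1,2) rz
    by (intro holomorphic_on_compose_gen[OF _ G(1), unfolded o_def]
          holomorphic_on_compose_gen[OF _ w(1), unfolded o_def] holomorphic_intros) auto
  moreover have "P ` unit_disk \<subseteq> car_region"
  proof (intro image_subsetI)
    fix z assume z: "z \<in> unit_disk"
    have "cmod (w (of_real r * z)) \<le> cmod (of_real r * z)"
      using w rz[OF z] by (intro Schwarz_Lemma(1)) (auto simp: unit_disk_def image_subset_iff)
    also have "\<dots> < r"
      using r z by (simp add: norm_mult mem_unit_disk)
    finally show "P z \<in> car_region"
      using G(3) by (auto simp: P_def)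
  qed
  moreover have "starq (rescale r f) z = P z" if "z \<in> unit_disk" for z
    using starq_rescale[OF f r that] starq_f[OF rz[OF that]] by (simp add: P_def)
  ultimately have "subordinate (starq (rescale r f)) phi_car"
    by (intro subordinate_phi_carI) (auto simp: P_def w(3) G(2))
  then show ?thesis
    using rescale_class_A[OF f r] by (simp add: S_car_altdef)
qed

lemma starq_in_car_region_if_S_car:
  assumes "g \<in> S_car" "z \<in> unit_disk"
  shows "starq g z \<in> car_region"
proof -
  obtain w where "w z \<in> unit_disk" "starq g z = phi_car (w z)"
    using assms unfolding S_car_altdef subordinate_def by blast
  then show ?thesis
    using phi_car_in_car_region by (simp add: mem_unit_disk)
qed

lemma starq_in_car_region_if_rescale_in_S_car:
  assumes f: "f \<in> class_A" and r: "0 < r" "r \<le> 1" and S: "rescale r f \<in> S_car" and z: "cmod z < r"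
  shows "starq f z \<in> car_region"
proof -
  have z_r: "z / of_real r \<in> unit_disk"
    using r z by (simp add: mem_unit_disk norm_divide)
  have "starq f z = starq (rescale r f) (z / of_real r)"
    using starq_rescale[OF f r z_r] r by simp
  then show ?thesis
    using starq_in_car_region_if_S_car[OF S z_r] by simp
qed

lemma car_radius_eq_if_janowski_extremal:
  assumes B: "\<bar>B\<bar> \<le> 1" "B \<le> A"
    and F: "F \<subseteq> S_janowski A B" "f \<in> F" "\<And>z. z \<in> unit_disk \<Longrightarrow> starq f z = janowski A B z"
    and R: "0 < R" "R \<le> 1" "(2*A - B) * R \<le> 1" "(2*A - 5*B) * R \<le> 3"
    and sharp: "R = 1 \<or> (2*A - B) * R = 1 \<or> (2*A - 5*B) * R = 3"
  shows "car_radius F = R"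
proof (rule car_radius_eqI[OF R(1,2)])
  fix r g assume r: "0 < r" "r \<le> R" and "g \<in> F"
  then have g: "g \<in> class_A" "subordinate (starq g) (janowski A B)"
    using F(1) by (auto simp: S_janowski_altdef)
  have "janowski A B ` ball 0 r \<subseteq> janowski A B ` ball 0 R"
    using r by (intro image_mono subset_ball)
  also have "\<dots> \<subseteq> car_region"
    using B R(2-4) by (rule janowski_image_ball_subset_car_region)
  finally show "rescale r g \<in> S_car"
    using r R holomorphic_janowski[OF B(1)]
    by (intro rescale_in_S_car_if_subordinate[OF g]) auto
next
  fix r assume r: "R < r" "r \<le> 1"
  define s where "s = (R + r) / 2"
  have s: "R < s" "s < r" "s < 1"
    using r by (auto simp: s_def)
  have above: "c \<le> k * s" if "k * R = c" "0 < c" for k c :: real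
  proof -
    have "0 < k"
      using zero_less_mult_pos2[of k R] that R(1) by simp
    then show ?thesis
      using that s(1) by (metis mult_left_mono less_imp_le)
  qed
  have "1 \<le> (2*A - B) * s \<or> 3 \<le> (2*A - 5*B) * s"
    using sharp r above[of "2*A - B" 1] above[of "2*A - 5*B" 3] by auto
  moreover have "0 \<le> s"
    using s(1) R(1) by simp
  ultimately obtain x where x: "\<bar>x\<bar> = s" "janowski A B (of_real x) \<notin> car_region"
    using janowski_of_real_notin_car_region[OF B(1)] s(3) by blast
  have f: "f \<in> class_A"
    using F(1,2) by (auto simp: S_janowski_altdef)
  have "starq f (of_real x) \<notin> car_region"
    using F(3)[of "of_real x"] x s by (simp add: mem_unit_disk)
  then have "rescale r f \<notin> S_car"
    using starq_in_car_region_if_rescale_in_S_car[OF f, of r "of_real x"] x s r R(1) by auto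
  then show "\<exists>f\<in>F. rescale r f \<notin> S_car"
    using F(2) by blast
qed

lemma car_radius_S_janowski:
  assumes "\<bar>B\<bar> \<le> 1" "B \<le> A"
    and "0 < R" "R \<le> 1" "(2*A - B) * R \<le> 1" "(2*A - 5*B) * R \<le> 3"
    and "R = 1 \<or> (2*A - B) * R = 1 \<or> (2*A - 5*B) * R = 3"
  shows "car_radius (S_janowski A B) = R"
proof -
  obtain f where f: "f \<in> class_A" "\<And>z. z \<in> unit_disk \<Longrightarrow> starq f z = janowski A B z"
    using exists_class_A_starq_eq[OF holomorphic_janowski[OF assms(1)] janowski_0] by blast
  have "subordinate (starq f) (janowski A B)"
    unfolding subordinate_def by (intro exI[of _ "\<lambda>z. z"]) (auto simp: f(2))
  with f(1) have "f \<in> S_janowski A B"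
    by (simp add: S_janowski_altdef)
  with f(2) assms show ?thesis
    by (intro car_radius_eq_if_janowski_extremal) auto
qed

lemma norm_minus_1_less_iff_Re_greater:
  fixes \<alpha> :: real
  assumes "\<alpha> < 1"
  shows "cmod (p - 1) < cmod (p + of_real (1 - 2*\<alpha>)) \<longleftrightarrow> \<alpha> < Re p"
proof -
  have "cmod (p + of_real (1 - 2*\<alpha>)) ^ 2 - cmod (p - 1) ^ 2 = 4 * (1 - \<alpha>) * (Re p - \<alpha>)"
    unfolding cmod_power2 by (simp add: power2_eq_square algebra_simps)
  moreover have "cmod (p - 1) < cmod (p + of_real (1 - 2*\<alpha>))
      \<longleftrightarrow> cmod (p - 1) ^ 2 < cmod (p + of_real (1 - 2*\<alpha>)) ^ 2"
    using abs_le_square_iff[of "cmod (p + of_real (1 - 2*\<alpha>))" "cmod (p - 1)"]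
    by (simp add: not_le[symmetric])
  moreover have "0 < 4 * (1 - \<alpha>) * (Re p - \<alpha>) \<longleftrightarrow> \<alpha> < Re p"
    using assms by (simp add: zero_less_mult_iff)
  ultimately show ?thesis
    by linarith
qed

lemma S_star_order_subset_S_janowski:
  assumes "0 \<le> \<alpha>" "\<alpha> < 1"
  shows "S_star_order \<alpha> \<subseteq> S_janowski (1 - 2*\<alpha>) (-1)"
proof
  fix f assume "f \<in> S_star_order \<alpha>"
  then have f: "f \<in> class_A" and Re: "\<And>z. z \<in> unit_disk \<Longrightarrow> \<alpha> < Re (starq f z)"
    by (auto simp: S_star_order_def)
  define a where "a = complex_of_real (1 - 2*\<alpha>)"
  have "f z \<noteq> 0" if "z \<in> unit_disk" "z \<noteq> 0" for z
    using Re[OF that(1)] that(2) assms(1) by (auto simp: starq_def)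
  then have "starq f holomorphic_on unit_disk"
    by (rule holomorphic_starq[OF f])
  have less: "cmod (starq f z - 1) < cmod (starq f z + a)" if "z \<in> unit_disk" for z
    using Re[OF that] norm_minus_1_less_iff_Re_greater[OF assms(2)] unfolding a_def by blast
  then have den: "starq f z + a \<noteq> 0" if "z \<in> unit_disk" for z
    using that by fastforce
  define w where "w = (\<lambda>z. (starq f z - 1) / (starq f z + a))"
  have "w holomorphic_on unit_disk"
    unfolding w_def by (intro holomorphic_intros \<open>starq f holomorphic_on unit_disk\<close>) (use den in auto)
  moreover have "w ` unit_disk \<subseteq> unit_disk"
    using less den by (auto simp: w_def mem_unit_disk norm_divide divide_less_eq)
  moreover have "w 0 = 0"
    by (simp add: w_def starq_def)
  moreover have "starq f z = janowski (1 - 2*\<alpha>) (-1) (w z)" if "z \<in> unit_disk" for z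
  proof -
    define p where "p = starq f z"
    have "1 + a \<noteq> 0"
      using assms(2) of_real_eq_iff[of "2 - 2*\<alpha>" 0] by (simp add: a_def)
    moreover have "p + a \<noteq> 0"
      using den[OF that] by (simp add: p_def)
    moreover have "1 + a * w z = (1 + a) * p / (p + a)" "1 - w z = (1 + a) / (p + a)"
      using den[OF that] by (simp_all add: w_def p_def field_simps)
    ultimately show ?thesis
      unfolding janowski_def a_def[symmetric] by (simp add: p_def)
  qed
  ultimately have "subordinate (starq f) (janowski (1 - 2*\<alpha>) (-1))"
    unfolding subordinate_def by blast
  with f show "f \<in> S_janowski (1 - 2*\<alpha>) (-1)"
    by (simp add: S_janowski_altdef)
qed

lemma janowski_extremal_in_S_star_order:
  assumes "\<alpha> < 1" "f \<in> class_A" "\<And>z. z \<in> unit_disk \<Longrightarrow> starq f z = janowski (1 - 2*\<alpha>) (-1) z"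
  shows "f \<in> S_star_order \<alpha>"
proof -
  define a where "a = complex_of_real (1 - 2*\<alpha>)"
  have "\<alpha> < Re (starq f z)" if z: "z \<in> unit_disk" for z
  proof -
    define p where "p = janowski (1 - 2*\<alpha>) (-1) z"
    have "1 + a \<noteq> 0"
      using assms(1) of_real_eq_iff[of "2 - 2*\<alpha>" 0] by (simp add: a_def)
    moreover have "z \<noteq> 1"
      using z by (auto simp: mem_unit_disk)
    ultimately have pa: "p + a \<noteq> 0" and "p - 1 = z * (p + a)"
      unfolding p_def janowski_def a_def[symmetric] by (simp_all add: field_simps)
    then have "cmod (p - 1) = cmod z * cmod (p + a)"
      by (simp only: norm_mult)
    also have "\<dots> < 1 * cmod (p + a)"
      using z pa by (intro mult_strict_right_mono) (auto simp: mem_unit_disk)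
    finally show ?thesis
      using assms(3)[OF z] norm_minus_1_less_iff_Re_greater[OF assms(1)] unfolding p_def a_def by simp
  qed
  with assms(2) show ?thesis
    by (simp add: S_star_order_def)
qed

lemma car_radius_S_star_order:
  assumes "0 \<le> \<alpha>" "\<alpha> < 1"
    and "0 < R" "R \<le> 1" "(3 - 4*\<alpha>) * R \<le> 1" "(7 - 4*\<alpha>) * R \<le> 3"
    and "(3 - 4*\<alpha>) * R = 1 \<or> (7 - 4*\<alpha>) * R = 3"
  shows "car_radius (S_star_order \<alpha>) = R"
proof -
  have "janowski (1 - 2*\<alpha>) (-1) holomorphic_on unit_disk"
    by (rule holomorphic_janowski) simp
  then obtain f where f: "f \<in> class_A" "\<And>z. z \<in> unit_disk \<Longrightarrow> starq f z = janowski (1 - 2*\<alpha>) (-1) z"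
    using exists_class_A_starq_eq janowski_0 by blast
  have "f \<in> S_star_order \<alpha>"
    using janowski_extremal_in_S_star_order[OF assms(2) f] .
  moreover have "2 * (1 - 2*\<alpha>) - -1 = 3 - 4*\<alpha>" "2 * (1 - 2*\<alpha>) - 5 * -1 = 7 - 4*\<alpha>"
    by simp_all
  ultimately show ?thesis
    using f(2) assms S_star_order_subset_S_janowski[OF assms(1,2)]
    by (intro car_radius_eq_if_janowski_extremal[where A = "1 - 2*\<alpha>" and B = "-1"]) simp_all
qed

theorem corollary4p2:
  shows "(\<forall>\<alpha>::real. 0 \<le> \<alpha> \<and> \<alpha> \<le> 1/4 \<longrightarrow>
            car_radius (S_star_order \<alpha>) = 1 / (3 - 4*\<alpha>))
       \<and> (\<forall>\<alpha>::real. 1/4 < \<alpha> \<and> \<alpha> < 1 \<longrightarrow>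
            car_radius (S_star_order \<alpha>) = 3 / (7 - 4*\<alpha>))
       \<and> (\<forall>\<alpha>::real. 0 < \<alpha> \<and> \<alpha> < 1/2 \<longrightarrow>
            car_radius (S_janowski (1 - \<alpha>) 0) = 1 / (2 * (1 - \<alpha>)))
       \<and> (\<forall>\<alpha>::real. 1/2 \<le> \<alpha> \<and> \<alpha> < 1 \<longrightarrow>
            car_radius (S_janowski (1 - \<alpha>) 0) = 1)
       \<and> (\<forall>\<alpha>::real. 0 < \<alpha> \<and> \<alpha> \<le> 1/3 \<longrightarrow>
            car_radius (S_janowski \<alpha> (-\<alpha>)) = 1)
       \<and> (\<forall>\<alpha>::real. 1/3 < \<alpha> \<and> \<alpha> \<le> 1 \<longrightarrow>
            car_radius (S_janowski \<alpha> (-\<alpha>)) = 1 / (3 * \<alpha>))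
       \<and> (\<forall>M::real. M > 1/2 \<longrightarrow>
            car_radius (S_janowski 1 (-(M - 1) / M)) = M / (3 * M - 1))"
proof -
  have "car_radius (S_star_order \<alpha>) = 1 / (3 - 4*\<alpha>)" if "0 \<le> \<alpha>" "\<alpha> \<le> 1/4" for \<alpha> :: real
    using that by (intro car_radius_S_star_order) (auto simp: field_simps)
  moreover have "car_radius (S_star_order \<alpha>) = 3 / (7 - 4*\<alpha>)" if "1/4 < \<alpha>" "\<alpha> < 1" for \<alpha> :: real
    using that by (intro car_radius_S_star_order) (auto simp: field_simps)
  moreover have "car_radius (S_janowski (1 - \<alpha>) 0) = 1 / (2 * (1 - \<alpha>))" if "0 < \<alpha>" "\<alpha> < 1/2" for \<alpha> :: real
    using that by (intro car_radius_S_janowski) (auto simp: field_simps)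
  moreover have "car_radius (S_janowski (1 - \<alpha>) 0) = 1" if "1/2 \<le> \<alpha>" "\<alpha> < 1" for \<alpha> :: real
    using that by (intro car_radius_S_janowski) auto
  moreover have "car_radius (S_janowski \<alpha> (-\<alpha>)) = 1" if "0 < \<alpha>" "\<alpha> \<le> 1/3" for \<alpha> :: real
    using that by (intro car_radius_S_janowski) auto
  moreover have "car_radius (S_janowski \<alpha> (-\<alpha>)) = 1 / (3 * \<alpha>)" if "1/3 < \<alpha>" "\<alpha> \<le> 1" for \<alpha> :: real
    using that by (intro car_radius_S_janowski) (auto simp: field_simps)
  moreover have "car_radius (S_janowski 1 (-(M - 1) / M)) = M / (3 * M - 1)" if "M > 1/2" for M :: real
    using that by (intro car_radius_S_janowski) (auto simp: field_simps)
  ultimately show ?thesis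
    by blast
qed

end
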